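(* Let $G=(V,E,m,w)$ be a weighted graph admitting an intrinsic metric $\rho$ with finite balls and finite jump size $s=\sup_{x\sim y}\rho(x,y)$. Suppose $G$ has polynomial volume growth: there are $x_0\in V$ and constants $\alpha, C$ with $m(B_R(x_0))\le C(1+R)^{\alpha}$ for all $R>0$. Let $k>0$ and $u\in\widetilde{\mathcal{P}}_k(G)$. Then for any $q\in\mathbb{N}$ with $4q>2k+\alpha+2$, $D_t^q u\equiv 0$. In particular, there exist functions $p_i$ on $V$, $0\le i\le q-1$, such that $u(x,t)=\sum_{i=0}^{q-1}p_i(x)\binom{-t}{i}$ for all $x\in V$, $t\in\mathbb{Z}_-$.
   Context: A weighted graph $G=(V,E,m,w)$ consists of a locally finite, simple, undirected, connected graph $(V,E)$, a symmetric edge weight $w:E\to(0,\infty)$, and a vertex weight $m:V\to(0,\infty)$; $m(\Omega)=\sum_{x\in\Omega}m_x$. The Laplacian is $\Delta f(x)=\sum_{y\sim x}\frac{w_{xy}}{m_x}(f(y)-f(x))$. A (pseudo)metric $\rho$ on $V$ is intrinsic if $\sum_{y\sim x}w_{xy}\rho^2(x,y)\le m_x$ for all $x$; $B_R(x)=\{y:\rho(y,x)\le R\}$. $\mathbb{Z}_-=\mathbb{Z}\cap(-\infty,0]$; $D_t u(x,t)=u(x,t)-u(x,t-1)$ and $D_t^q$ is its $q$-fold composition. An ancient solution of the discrete-time heat equation is $u:V\times\mathbb{Z}_-\to\mathbb{R}$ with $D_tu=\Delta u$. $\widetilde{\mathcal{P}}_k(G)$ is the space of such solutions for which there are $x_0\in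 V$ and $C_u$ with $\sup_{B_R(x_0)\times([-R^2,0]\cap\mathbb{Z})}|u|\le C_u(1+R)^k$ for all $R>0$. For $n\in\mathbb{Z}_{\ge0}$, $\binom{n}{i}=\frac{n(n-1)\cdots(n-i+1)}{i!}$ if $0\le i\le n$ and $0$ otherwise. *)

theory Defs
  imports Complex_Main
begin

text \<open>A weighted graph on the vertex type 'a (V = UNIV): adjacency relation E,
 edge weight w (only relevant on edges), vertex weight m.\<close>
definition weighted_graph :: "('a \<Rightarrow> 'a \<Rightarrow> bool) \<Rightarrow> ('a \<Rightarrow> 'a \<Rightarrow> real) \<Rightarrow> ('a \<Rightarrow> real) \<Rightarrow> bool" where
  "weighted_graph E w m \<longleftrightarrow>
     (\<forall>x y. E x y \<longrightarrow> E y x) \<and>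
     (\<forall>x. \<not> E x x) \<and>
     (\<forall>x. finite {y. E x y}) \<and>
     (\<forall>x y. (E\<^sup>*\<^sup>*) x y) \<and>
     (\<forall>x y. E x y \<longrightarrow> w x y > 0 \<and> w x y = w y x) \<and>
     (\<forall>x. m x > 0)"

definition laplacian :: "('a \<Rightarrow> 'a \<Rightarrow> bool) \<Rightarrow> ('a \<Rightarrow> 'a \<Rightarrow> real) \<Rightarrow> ('a \<Rightarrow> real) \<Rightarrow> ('a \<Rightarrow> real) \<Rightarrow> 'a \<Rightarrow> real" where
  "laplacian E w m f x = (\<Sum>y\<in>{y. E x y}. w x y / m x * (f y - f x))"

definition pseudometric :: "('a \<Rightarrow> 'a \<Rightarrow> real) \<Rightarrow> bool" where
  "pseudometric \<rho> \<longleftrightarrow> (\<forall>x y. \<rho> x y \<ge> 0) \<and> (\<forall>x. \<rho> x x = 0) \<and>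
     (\<forall>x y. \<rho> x y = \<rho> y x) \<and> (\<forall>x y z. \<rho> x z \<le> \<rho> x y + \<rho> y z)"

definition intrinsic_metric :: "('a \<Rightarrow> 'a \<Rightarrow> bool) \<Rightarrow> ('a \<Rightarrow> 'a \<Rightarrow> real) \<Rightarrow> ('a \<Rightarrow> real) \<Rightarrow> ('a \<Rightarrow> 'a \<Rightarrow> real) \<Rightarrow> bool" where
  "intrinsic_metric E w m \<rho> \<longleftrightarrow> pseudometric \<rho> \<and>
     (\<forall>x. (\<Sum>y\<in>{y. E x y}. w x y * (\<rho> x y)\<^sup>2) \<le> m x)"

definition ball :: "('a \<Rightarrow> 'a \<Rightarrow> real) \<Rightarrow> 'a \<Rightarrow> real \<Rightarrow> 'a set" where
  "ball \<rho> x R = {y. \<rho> y x \<le> R}"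

definition Dt :: "('a \<Rightarrow> int \<Rightarrow> real) \<Rightarrow> 'a \<Rightarrow> int \<Rightarrow> real" where
  "Dt u x t = u x t - u x (t - 1)"

text \<open>Ancient solution on V \<times> Z_- (values at t > 0 are irrelevant).\<close>
definition ancient_solution :: "('a \<Rightarrow> 'a \<Rightarrow> bool) \<Rightarrow> ('a \<Rightarrow> 'a \<Rightarrow> real) \<Rightarrow> ('a \<Rightarrow> real) \<Rightarrow> ('a \<Rightarrow> int \<Rightarrow> real) \<Rightarrow> bool" where
  "ancient_solution E w m u \<longleftrightarrow>
     (\<forall>x. \<forall>t\<le>0. Dt u x t = laplacian E w m (\<lambda>y. u y t) x)"

definition P_tilde :: "('a \<Rightarrow> 'a \<Rightarrow> bool) \<Rightarrow> ('a \<Rightarrow> 'a \<Rightarrow> real) \<Rightarrow> ('a \<Rightarrow> real) \<Rightarrow> ('a \<Rightarrow> 'a \<Rightarrow> real) \<Rightarrow> real \<Rightarrow> ('a \<Rightarrow> int \<Rightarrow> real) set" where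
  "P_tilde E w m \<rho> k = {u. ancient_solution E w m u \<and>
     (\<exists>x0 C. \<forall>R>0. \<forall>x\<in>ball \<rho> x0 R. \<forall>t::int. - (R\<^sup>2) \<le> real_of_int t \<and> t \<le> 0 \<longrightarrow>
        \<bar>u x t\<bar> \<le> C * (1 + R) powr k)}"

end

theory Submission
  imports Defs
begin

text \<open>
  Write \<open>Q(h, r, T)\<close> (\<open>cylinder_L2 h r T\<close>) for the \<open>L\<^sup>2\<close> mass of \<open>h\<close> on the
  parabolic cylinder \<open>B\<^sub>r \<times> [-T, 0]\<close>. Testing the heat equation against \<open>\<phi>\<^sup>2 u\<close> and against \<open>\<phi>\<^sup>2 D\<^sub>t u\<close>,
  where \<open>\<phi>\<close> is a Lipschitz cutoff of width \<open>L \<ge> s\<close>, and summing over time with the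
  weights \<open>n\<close> and \<open>n (n - 1)\<close> gives the reverse Poincare type estimate
  \<open>T\<^sup>2 Q(D\<^sub>t h, r, T) \<le> 24 Q(h, r + 4 L, 4 T)\<close> whenever \<open>2 T + 1 \<le> L\<^sup>2\<close>.
  Iterating it \<open>q\<close> times at scale \<open>L \<sim> n\<close>, \<open>T = n\<^sup>2\<close> and bounding the right-hand side
  by the growth of \<open>u\<close> and the volume growth yields
  \<open>n\<^sup>4\<^sup>q m\<^sub>x |D\<^sub>t\<^sup>q u(x, t)|\<^sup>2 = O(n\<^sup>2\<^sup>+\<^sup>\<alpha>\<^sup>+\<^sup>2\<^sup>k)\<close>, so \<open>D\<^sub>t\<^sup>q u = 0\<close> when \<open>4 q > 2 k + \<alpha> + 2\<close>.
  A function on \<open>\<int>\<^sub>-\<close> with vanishing \<open>q\<close>-th backward difference is a combination of the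
  binomials \<open>(-t choose i)\<close>, \<open>i < q\<close>, by Newton's forward difference formula.
\<close>

lemma sum_by_parts_linear:
  fixes F :: "nat \<Rightarrow> real"
  shows "(\<Sum>n\<in>{1..T}. real n * (F n - F (n - 1))) = real T * F T - (\<Sum>n<T. F n)"
  by (induction T) (simp_all add: algebra_simps)

lemma sum_by_parts_quadratic:
  fixes J :: "nat \<Rightarrow> real"
  shows "(\<Sum>n\<in>{1..T}. real n * (real n - 1) * (J (n - 1) - J n))
    = (\<Sum>n<T. 2 * real n * J n) - real T * (real T - 1) * J T"
  by (induction T) (simp_all add: algebra_simps)

lemma sum_linear_weight_le:
  fixes F G N :: "nat \<Rightarrow> real"
  assumes step: "\<And>n. n \<in> {1..T} \<Longrightarrow> F n - F (n - 1) + G n / 4 \<le> c * N n"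
    and F: "\<And>n. 0 \<le> F n" "\<And>n. F n \<le> N n" and c: "0 \<le> c"
  shows "(\<Sum>n\<in>{1..T}. real n * G n) \<le> 4 * (1 + c * real T) * (\<Sum>n\<le>T. N n)"
proof -
  have N: "0 \<le> N n" for n
    using F[of n] by linarith
  have "(\<Sum>n\<in>{1..T}. real n * (F n - F (n - 1)) + real n * G n / 4) \<le> (\<Sum>n\<in>{1..T}. c * real T * N n)"
  proof (rule sum_mono)
    fix n assume n: "n \<in> {1..T}"
    have "real n * (F n - F (n - 1)) + real n * G n / 4 = real n * (F n - F (n - 1) + G n / 4)"
      by (simp add: algebra_simps)
    also have "\<dots> \<le> real n * (c * N n)"
      using step[OF n] by (intro mult_left_mono) auto
    also have "\<dots> \<le> real T * (c * N n)"
      using n N[of n] c by (intro mult_right_mono) auto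
    finally show "real n * (F n - F (n - 1)) + real n * G n / 4 \<le> c * real T * N n"
      by (simp add: mult_ac)
  qed
  then have A: "(\<Sum>n\<in>{1..T}. real n * (F n - F (n - 1))) + (\<Sum>n\<in>{1..T}. real n * G n) / 4
      \<le> c * real T * (\<Sum>n\<in>{1..T}. N n)"
    by (simp add: sum.distrib sum_distrib_left sum_divide_distrib)
  have "(\<Sum>n<T. F n) \<le> (\<Sum>n<T. N n)"
    by (intro sum_mono F)
  also have "\<dots> \<le> (\<Sum>n\<le>T. N n)"
    by (intro sum_mono2) (auto intro: N)
  moreover have "0 \<le> real T * F T"
    using F(1)[of T] by simp
  ultimately have B: "- (\<Sum>n\<le>T. N n) \<le> (\<Sum>n\<in>{1..T}. real n * (F n - F (n - 1)))"
    unfolding sum_by_parts_linear by linarith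
  have C: "c * real T * (\<Sum>n\<in>{1..T}. N n) \<le> c * real T * (\<Sum>n\<le>T. N n)"
    using c by (intro mult_left_mono sum_mono2) (auto intro: N)
  have "(\<Sum>n\<in>{1..T}. real n * G n) \<le> 4 * ((\<Sum>n\<le>T. N n) + c * real T * (\<Sum>n\<le>T. N n))"
    using A B C by argo
  then show ?thesis
    by (simp add: algebra_simps)
qed

lemma sum_quadratic_weight_le:
  fixes X J G :: "nat \<Rightarrow> real"
  assumes step: "\<And>n. n \<in> {1..T} \<Longrightarrow> X n \<le> (J (n - 1) - J n) / 2 + c * G n"
    and J: "\<And>n. 0 \<le> J n" "\<And>n. J n \<le> G n" and c: "0 \<le> c"
  shows "(\<Sum>n\<in>{1..T}. real n * (real n - 1) * X n) \<le> (1 + c * real T) * (\<Sum>n\<in>{1..T}. real n * G n)"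
proof -
  have G: "0 \<le> G n" for n
    using J[of n] by linarith
  have "(\<Sum>n\<in>{1..T}. real n * (real n - 1) * X n)
      \<le> (\<Sum>n\<in>{1..T}. real n * (real n - 1) * (J (n - 1) - J n) / 2 + c * real T * (real n * G n))"
  proof (rule sum_mono)
    fix n assume n: "n \<in> {1..T}"
    have "real n * (real n - 1) * X n \<le> real n * (real n - 1) * ((J (n - 1) - J n) / 2 + c * G n)"
      using step[OF n] n by (intro mult_left_mono) auto
    also have "\<dots> = real n * (real n - 1) * (J (n - 1) - J n) / 2 + c * (real n - 1) * (real n * G n)"
      by (simp add: algebra_simps)
    also have "\<dots> \<le> real n * (real n - 1) * (J (n - 1) - J n) / 2 + c * real T * (real n * G n)"
      using n c G[of n] by (intro add_left_mono mult_right_mono mult_left_mono) auto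
    finally show "real n * (real n - 1) * X n
        \<le> real n * (real n - 1) * (J (n - 1) - J n) / 2 + c * real T * (real n * G n)" .
  qed
  also have "\<dots> = (\<Sum>n\<in>{1..T}. real n * (real n - 1) * (J (n - 1) - J n)) / 2
      + c * real T * (\<Sum>n\<in>{1..T}. real n * G n)"
    by (simp add: sum.distrib sum_distrib_left sum_divide_distrib)
  also have "(\<Sum>n\<in>{1..T}. real n * (real n - 1) * (J (n - 1) - J n)) \<le> 2 * (\<Sum>n\<in>{1..T}. real n * G n)"
  proof -
    have "(\<Sum>n<T. 2 * real n * J n) \<le> (\<Sum>n\<le>T. 2 * real n * G n)"
      using sum_mono[of "{..<T}" "\<lambda>n. 2 * real n * J n" "\<lambda>n. 2 * real n * G n"]
        sum_mono2[of "{..T}" "{..<T}" "\<lambda>n. 2 * real n * G n"] J G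
      by (force intro: mult_left_mono)
    also have "{..T} = insert 0 {1..T}"
      by auto
    moreover have "0 \<le> real T * (real T - 1) * J T"
      using J(1)[of T] by (cases T) auto
    ultimately show ?thesis
      unfolding sum_by_parts_quadratic by (simp add: sum_distrib_left mult.assoc)
  qed
  finally show ?thesis
    by (simp add: algebra_simps)
qed

lemma sum_shift_nonpos:
  "a \<le> N \<Longrightarrow> (\<Sum>n\<in>{a..N}. f (int n - int N)) = (\<Sum>t\<in>{int a - int N..0}. f t)"
  by (rule sum.reindex_bij_witness[of _ "\<lambda>t. nat (t + int N)" "\<lambda>n. int n - int N"]) auto

lemma powr_affine_le:
  fixes n c d a :: real
  assumes n: "1 \<le> n" and c: "1 \<le> c" and d: "0 \<le> d"
  shows "(1 + c * n + d) powr a \<le> max 1 ((1 + c + d) powr a) * n powr a"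
proof (cases "0 \<le> a")
  case True
  have "d * 1 \<le> d * n"
    using n d by (intro mult_left_mono) auto
  then have "(1 + c * n + d) powr a \<le> ((1 + c + d) * n) powr a"
    using n c d True by (intro powr_mono2) (auto simp: algebra_simps)
  also have "\<dots> = (1 + c + d) powr a * n powr a"
    using n c d by (simp add: powr_mult)
  also have "\<dots> \<le> max 1 ((1 + c + d) powr a) * n powr a"
    by (intro mult_right_mono) auto
  finally show ?thesis .
next
  case False
  have "1 * n \<le> c * n"
    using n c by (intro mult_right_mono) auto
  then have "n \<le> 1 + c * n + d"
    using d by linarith
  then have "(1 + c * n + d) powr a \<le> n powr a"
    using n False by (intro powr_mono2') auto
  also have "\<dots> \<le> max 1 ((1 + c + d) powr a) * n powr a"
    using mult_right_mono[of 1 "max 1 ((1 + c + d) powr a)" "n powr a"] by simp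
  finally show ?thesis .
qed

lemma product_rule_energy_ineq:
  fixes a b p q :: real
  shows "(a\<^sup>2 + b\<^sup>2) / 4 * (q - p)\<^sup>2 - (b - a)\<^sup>2 * (p\<^sup>2 + q\<^sup>2) \<le> (b\<^sup>2 * q - a\<^sup>2 * p) * (q - p)"
proof -
  have "(b\<^sup>2 * q - a\<^sup>2 * p) * (q - p) - ((a\<^sup>2 + b\<^sup>2) / 4 * (q - p)\<^sup>2 - (b - a)\<^sup>2 * (p\<^sup>2 + q\<^sup>2))
     = ((a + b) * (q - p) / 2 + (b - a) * (q + p))\<^sup>2 / 2 + 5 / 8 * (a - b)\<^sup>2 * (q - p)\<^sup>2"
    by (simp add: power2_eq_square field_simps)
  moreover have "0 \<le> ((a + b) * (q - p) / 2 + (b - a) * (q + p))\<^sup>2 / 2 + 5 / 8 * (a - b)\<^sup>2 * (q - p)\<^sup>2"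
    by simp
  ultimately show ?thesis
    by linarith
qed

lemma product_rule_time_derivative_ineq:
  fixes fx fy ax ay bx by' L :: real
  assumes f: "0 \<le> fx" "0 \<le> fy" and L: "0 < L"
  shows "fx * fy * (by' - bx)\<^sup>2 / 2 - fx * fy * (ay - ax)\<^sup>2 / 2
         - L\<^sup>2 / 2 * ((fy - fx)\<^sup>2 * (fx\<^sup>2 * (bx - ax)\<^sup>2 + fy\<^sup>2 * (by' - ay)\<^sup>2))
         - (if fy = fx then 0 else (by' - bx)\<^sup>2 / L\<^sup>2)
       \<le> (fy\<^sup>2 * (by' - ay) - fx\<^sup>2 * (bx - ax)) * (by' - bx)"
proof -
  define vx vy d e where "vx = bx - ax" and "vy = by' - ay" and "d = by' - bx" and "e = ay - ax"
  have split: "(fy\<^sup>2 * vy - fx\<^sup>2 * vx) * d = fx * fy * (d * (d - e)) + (fy - fx) * (fy * vy + fx * vx) * d"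
    unfolding vx_def vy_def d_def e_def by (simp add: power2_eq_square algebra_simps)
  have "fx * fy * (d * (d - e)) - (fx * fy * d\<^sup>2 / 2 - fx * fy * e\<^sup>2 / 2) = fx * fy * ((d - e)\<^sup>2 / 2)"
    by (simp add: power2_eq_square field_simps)
  moreover have "0 \<le> fx * fy * ((d - e)\<^sup>2 / 2)"
    using f by simp
  ultimately have diagonal: "fx * fy * d\<^sup>2 / 2 - fx * fy * e\<^sup>2 / 2 \<le> fx * fy * (d * (d - e))"
    by linarith
  have cross: "- L\<^sup>2 / 2 * ((fy - fx)\<^sup>2 * (fx\<^sup>2 * vx\<^sup>2 + fy\<^sup>2 * vy\<^sup>2)) - (if fy = fx then 0 else d\<^sup>2 / L\<^sup>2)
      \<le> (fy - fx) * (fy * vy + fx * vx) * d"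
  proof (cases "fy = fx")
    case False
    define P where "P = (fy - fx) * (fy * vy + fx * vx)"
    have "0 \<le> (L * P / 2 + d / L)\<^sup>2"
      by simp
    also have "(L * P / 2 + d / L)\<^sup>2 = L\<^sup>2 / 4 * P\<^sup>2 + d\<^sup>2 / L\<^sup>2 + P * d"
      using L by (simp add: power2_eq_square field_simps)
    finally have young: "- (L\<^sup>2 / 4 * P\<^sup>2 + d\<^sup>2 / L\<^sup>2) \<le> P * d"
      by linarith
    have "2 * ((fy - fx)\<^sup>2 * (fx\<^sup>2 * vx\<^sup>2 + fy\<^sup>2 * vy\<^sup>2)) - P\<^sup>2 = (fy - fx)\<^sup>2 * (fy * vy - fx * vx)\<^sup>2"
      unfolding P_def by (simp add: power2_eq_square algebra_simps)
    then have "P\<^sup>2 \<le> 2 * ((fy - fx)\<^sup>2 * (fx\<^sup>2 * vx\<^sup>2 + fy\<^sup>2 * vy\<^sup>2))"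
      by (metis diff_ge_0_iff_ge zero_le_mult_iff zero_le_power2)
    then have "L\<^sup>2 / 4 * P\<^sup>2 \<le> L\<^sup>2 / 4 * (2 * ((fy - fx)\<^sup>2 * (fx\<^sup>2 * vx\<^sup>2 + fy\<^sup>2 * vy\<^sup>2)))"
      by (intro mult_left_mono) auto
    then show ?thesis
      using young False unfolding P_def by simp
  qed simp
  show ?thesis
    using split diagonal cross
    unfolding vx_def[symmetric] vy_def[symmetric] d_def[symmetric] e_def[symmetric]
    by linarith
qed

lemma Dt_funpow_eq_zero_imp_binomial_sum:
  assumes "\<forall>t\<le>0. (Dt ^^ q) h x t = 0"
  shows "\<exists>c :: nat \<Rightarrow> real. \<forall>t\<le>0. h x t = (\<Sum>i<q. c i * real (nat (- t) choose i))"
  using assms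
proof (induction q arbitrary: h)
  case 0
  then show ?case by simp
next
  case (Suc q)
  have "\<forall>t\<le>0. (Dt ^^ q) (Dt h) x t = 0"
    using Suc.prems by (simp add: funpow_Suc_right del: funpow.simps)
  then obtain c where c: "\<And>t. t \<le> 0 \<Longrightarrow> Dt h x t = (\<Sum>i<q. c i * real (nat (- t) choose i))"
    using Suc.IH by blast
  have h: "h x (- int n) = h x 0 - (\<Sum>i<q. c i * real (n choose Suc i))" for n
  proof (induction n)
    case (Suc n)
    have "h x (- int (Suc n)) = h x (- int n - 1)"
      by (rule arg_cong[where f = "h x"]) simp
    also have "\<dots> = h x (- int n) - Dt h x (- int n)"
      by (simp add: Dt_def)
    also have "\<dots> = h x 0 - (\<Sum>i<q. c i * real (n choose Suc i)) - (\<Sum>i<q. c i * real (n choose i))"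
      using c[of "- int n"] Suc.IH by simp
    also have "\<dots> = h x 0 - (\<Sum>i<q. c i * real (Suc n choose Suc i))"
      by (simp add: sum.distrib[symmetric] algebra_simps)
    finally show ?case .
  qed simp
  define c' where "c' i = (if i = 0 then h x 0 else - c (i - 1))" for i
  have "h x t = (\<Sum>i<Suc q. c' i * real (nat (- t) choose i))" if "t \<le> 0" for t
  proof -
    have "h x t = h x (- int (nat (- t)))"
      using that by simp
    also have "\<dots> = h x 0 - (\<Sum>i<q. c i * real (nat (- t) choose Suc i))"
      by (rule h)
    also have "\<dots> = (\<Sum>i<Suc q. c' i * real (nat (- t) choose i))"
      by (subst sum.lessThan_Suc_shift) (simp add: c'_def sum_negf)
    finally show ?thesis .
  qed
  then show ?case
    by blast
qed

lemma laplacian_diff: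
  "laplacian E w m (\<lambda>y. f y - g y) x = laplacian E w m f x - laplacian E w m g x"
  unfolding laplacian_def sum_subtractf[symmetric] by (intro sum.cong refl) (simp add: right_diff_distrib)

lemma ancient_solution_Dt:
  assumes "ancient_solution E w m h"
  shows "ancient_solution E w m (Dt h)"
  unfolding ancient_solution_def
proof (intro allI impI)
  fix x and t :: int
  assume t: "t \<le> 0"
  have "Dt (Dt h) x t = Dt h x t - Dt h x (t - 1)"
    by (simp add: Dt_def)
  also have "\<dots> = laplacian E w m (\<lambda>y. h y t) x - laplacian E w m (\<lambda>y. h y (t - 1)) x"
    using assms t by (simp add: ancient_solution_def)
  also have "\<dots> = laplacian E w m (\<lambda>y. Dt h y t) x"
    unfolding Dt_def by (rule laplacian_diff[symmetric])
  finally show "Dt (Dt h) x t = laplacian E w m (\<lambda>y. Dt h y t) x" .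
qed

locale intrinsic_graph =
  fixes E :: "'a \<Rightarrow> 'a \<Rightarrow> bool" and w :: "'a \<Rightarrow> 'a \<Rightarrow> real" and m :: "'a \<Rightarrow> real"
    and \<rho> :: "'a \<Rightarrow> 'a \<Rightarrow> real" and x0 :: 'a and s :: real
  assumes graph: "weighted_graph E w m"
    and metric: "intrinsic_metric E w m \<rho>"
    and finite_ball: "finite (ball \<rho> x R)"
    and jump_nonneg: "0 \<le> s"
    and jump_bound: "E x y \<Longrightarrow> \<rho> x y \<le> s"
begin

lemma edge_sym: "E x y \<Longrightarrow> E y x"
  using graph by (simp add: weighted_graph_def)

lemma finite_neighbours: "finite {y. E x y}"
  using graph by (simp add: weighted_graph_def)

lemma weight_pos: "E x y \<Longrightarrow> 0 < w x y"
  using graph by (simp add: weighted_graph_def)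

lemma weight_sym: "E x y \<Longrightarrow> w x y = w y x"
  using graph by (simp add: weighted_graph_def)

lemma measure_pos: "0 < m x"
  using graph by (simp add: weighted_graph_def)

lemma rho_nonneg: "0 \<le> \<rho> x y"
  using metric by (simp add: intrinsic_metric_def pseudometric_def)

lemma rho_refl: "\<rho> x x = 0"
  using metric by (simp add: intrinsic_metric_def pseudometric_def)

lemma rho_sym: "\<rho> x y = \<rho> y x"
  using metric by (simp add: intrinsic_metric_def pseudometric_def)

lemma rho_triangle: "\<rho> x z \<le> \<rho> x y + \<rho> y z"
  using metric by (simp add: intrinsic_metric_def pseudometric_def)

lemma intrinsic_sum_le: "(\<Sum>y\<in>{y. E x y}. w x y * (\<rho> x y)\<^sup>2) \<le> m x"
  using metric by (simp add: intrinsic_metric_def)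

abbreviation B :: "real \<Rightarrow> 'a set" where
  "B r \<equiv> ball \<rho> x0 r"

lemma ball_mono: "a \<le> b \<Longrightarrow> B a \<subseteq> B b"
  unfolding ball_def by auto

lemma edge_in_ball: "E x y \<Longrightarrow> x \<in> B r \<Longrightarrow> y \<in> B (r + s)"
  using rho_triangle[of y x0 x] rho_sym[of y x] jump_bound[of x y] unfolding ball_def by simp

definition ball_L2 :: "real \<Rightarrow> ('a \<Rightarrow> real) \<Rightarrow> real" where
  "ball_L2 r f = (\<Sum>x\<in>B r. m x * (f x)\<^sup>2)"

definition cylinder_L2 :: "('a \<Rightarrow> int \<Rightarrow> real) \<Rightarrow> real \<Rightarrow> nat \<Rightarrow> real" where
  "cylinder_L2 h r T = (\<Sum>t\<in>{- int T..0}. ball_L2 r (\<lambda>x. h x t))"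

lemma ball_L2_nonneg: "0 \<le> ball_L2 r f"
  unfolding ball_L2_def by (intro sum_nonneg) (simp add: less_imp_le[OF measure_pos])

lemma ball_L2_eq_sum_if:
  "finite S \<Longrightarrow> B r \<subseteq> S \<Longrightarrow> ball_L2 r f = (\<Sum>x\<in>S. if x \<in> B r then m x * (f x)\<^sup>2 else 0)"
  unfolding ball_L2_def by (simp add: sum.inter_restrict[symmetric] Int_absorb1)

lemma cylinder_L2_nonneg: "0 \<le> cylinder_L2 h r T"
  unfolding cylinder_L2_def by (intro sum_nonneg ball_L2_nonneg)

lemma cylinder_L2_mono:
  assumes "r \<le> r'" "T \<le> T'"
  shows "cylinder_L2 h r T \<le> cylinder_L2 h r' T'"
proof -
  have "ball_L2 r f \<le> ball_L2 r' f" for f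
    unfolding ball_L2_def using assms(1) finite_ball ball_mono[OF assms(1)]
    by (intro sum_mono2) (auto simp: less_imp_le[OF measure_pos])
  then have "cylinder_L2 h r T \<le> (\<Sum>t\<in>{- int T..0}. ball_L2 r' (\<lambda>x. h x t))"
    unfolding cylinder_L2_def by (intro sum_mono)
  also have "\<dots> \<le> cylinder_L2 h r' T'"
    unfolding cylinder_L2_def using assms(2) by (intro sum_mono2 ball_L2_nonneg) auto
  finally show ?thesis .
qed

lemma point_le_cylinder_L2:
  assumes "x \<in> B r" "- int T \<le> t" "t \<le> 0"
  shows "m x * (h x t)\<^sup>2 \<le> cylinder_L2 h r T"
proof -
  have "m x * (h x t)\<^sup>2 \<le> ball_L2 r (\<lambda>x. h x t)"
    unfolding ball_L2_def using assms finite_ball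
    by (intro member_le_sum) (auto simp: less_imp_le[OF measure_pos])
  also have "\<dots> \<le> cylinder_L2 h r T"
    unfolding cylinder_L2_def using assms
    by (intro member_le_sum[where f = "\<lambda>t. ball_L2 r (\<lambda>x. h x t)"] ball_L2_nonneg) auto
  finally show ?thesis .
qed

definition edge_sum :: "'a set \<Rightarrow> ('a \<Rightarrow> 'a \<Rightarrow> real) \<Rightarrow> real" where
  "edge_sum S f = (\<Sum>x\<in>S. \<Sum>y\<in>S. if E x y then w x y * f x y else 0)"

lemma edge_sum_swap: "edge_sum S f = edge_sum S (\<lambda>x y. f y x)"
proof -
  have "edge_sum S f = (\<Sum>y\<in>S. \<Sum>x\<in>S. if E x y then w x y * f x y else 0)"
    unfolding edge_sum_def by (rule sum.swap)
  also have "\<dots> = edge_sum S (\<lambda>x y. f y x)"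
    unfolding edge_sum_def by (intro sum.cong refl) (auto simp: weight_sym edge_sym)
  finally show ?thesis .
qed

lemma edge_sum_mono:
  assumes "\<And>x y. E x y \<Longrightarrow> f x y \<le> g x y"
  shows "edge_sum S f \<le> edge_sum S g"
  unfolding edge_sum_def
  by (intro sum_mono) (auto intro!: mult_left_mono assms simp: less_imp_le[OF weight_pos])

lemma edge_sum_nonneg:
  assumes "\<And>x y. E x y \<Longrightarrow> 0 \<le> f x y"
  shows "0 \<le> edge_sum S f"
  unfolding edge_sum_def
  by (intro sum_nonneg) (auto intro!: mult_nonneg_nonneg assms simp: less_imp_le[OF weight_pos])

lemma edge_sum_add: "edge_sum S (\<lambda>x y. f x y + g x y) = edge_sum S f + edge_sum S g"
  unfolding edge_sum_def by (simp add: sum.distrib[symmetric] algebra_simps if_distrib cong: if_cong)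

lemma edge_sum_diff: "edge_sum S (\<lambda>x y. f x y - g x y) = edge_sum S f - edge_sum S g"
  unfolding edge_sum_def by (simp add: sum_subtractf[symmetric] algebra_simps if_distrib cong: if_cong)

lemma edge_sum_cmult: "edge_sum S (\<lambda>x y. c * f x y) = c * edge_sum S f"
  unfolding edge_sum_def by (simp add: sum_distrib_left algebra_simps if_distrib cong: if_cong)

lemma mult_laplacian_eq_sum:
  assumes "finite S" "{y. E x y} \<subseteq> S"
  shows "m x * laplacian E w m f x = (\<Sum>y\<in>S. if E x y then w x y * (f y - f x) else 0)"
proof -
  have "m x * laplacian E w m f x = (\<Sum>y\<in>{y. E x y}. w x y * (f y - f x))"
    unfolding laplacian_def sum_distrib_left using measure_pos[of x]
    by (intro sum.cong refl) (simp add: field_simps)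
  also have "\<dots> = (\<Sum>y\<in>S \<inter> {y. E x y}. w x y * (f y - f x))"
    using assms by (simp add: Int_absorb1)
  also have "\<dots> = (\<Sum>y\<in>S. if E x y then w x y * (f y - f x) else 0)"
    using assms(1) by (simp add: sum.inter_restrict)
  finally show ?thesis .
qed

lemma green_formula:
  assumes S: "finite S" and g: "\<And>x. g x \<noteq> 0 \<Longrightarrow> x \<in> S \<and> {y. E x y} \<subseteq> S"
  shows "(\<Sum>x\<in>S. g x * (m x * laplacian E w m f x)) = - edge_sum S (\<lambda>x y. (g y - g x) * (f y - f x)) / 2"
proof -
  have "(\<Sum>x\<in>S. g x * (m x * laplacian E w m f x)) = edge_sum S (\<lambda>x y. g x * (f y - f x))"
    unfolding edge_sum_def
  proof (intro sum.cong refl)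
    fix x assume "x \<in> S"
    show "g x * (m x * laplacian E w m f x) = (\<Sum>y\<in>S. if E x y then w x y * (g x * (f y - f x)) else 0)"
    proof (cases "g x = 0")
      case True
      then show ?thesis
        by (simp cong: if_cong)
    next
      case False
      then show ?thesis
        using mult_laplacian_eq_sum[OF S, of x f] g
        by (simp add: sum_distrib_left algebra_simps if_distrib cong: if_cong)
    qed
  qed
  also have "\<dots> = (edge_sum S (\<lambda>x y. g x * (f y - f x)) + edge_sum S (\<lambda>x y. g y * (f x - f y))) / 2"
    using edge_sum_swap[of S "\<lambda>x y. g x * (f y - f x)"] by simp
  also have "\<dots> = - edge_sum S (\<lambda>x y. (g y - g x) * (f y - f x)) / 2"
    unfolding edge_sum_add[symmetric] using edge_sum_cmult[of S "-1" "\<lambda>x y. (g y - g x) * (f y - f x)"]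
    by (simp add: algebra_simps)
  finally show ?thesis .
qed

lemma edge_sum_lipschitz_le:
  assumes S: "finite S" and L: "0 < L" and lip: "\<And>x y. \<bar>\<phi> y - \<phi> x\<bar> \<le> \<rho> x y / L"
    and h: "\<And>x. 0 \<le> h x"
  shows "edge_sum S (\<lambda>x y. (\<phi> y - \<phi> x)\<^sup>2 * h x) \<le> (\<Sum>x\<in>S. h x * m x) / L\<^sup>2"
proof -
  have "(\<Sum>y\<in>S. if E x y then w x y * (\<phi> y - \<phi> x)\<^sup>2 else 0) \<le> m x / L\<^sup>2" for x
  proof -
    have "(\<Sum>y\<in>S. if E x y then w x y * (\<phi> y - \<phi> x)\<^sup>2 else 0)
        \<le> (\<Sum>y\<in>S. if E x y then w x y * (\<rho> x y)\<^sup>2 / L\<^sup>2 else 0)"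
    proof (intro sum_mono)
      fix y
      have "(\<phi> y - \<phi> x)\<^sup>2 \<le> (\<rho> x y / L)\<^sup>2"
        using power_mono[OF lip[of y x] abs_ge_zero, of 2] by simp
      then show "(if E x y then w x y * (\<phi> y - \<phi> x)\<^sup>2 else 0) \<le> (if E x y then w x y * (\<rho> x y)\<^sup>2 / L\<^sup>2 else 0)"
        using weight_pos[of x y] by (auto simp: power_divide simp flip: times_divide_eq_right)
    qed
    also have "\<dots> = (\<Sum>y\<in>S. if E x y then w x y * (\<rho> x y)\<^sup>2 else 0) / L\<^sup>2"
      unfolding sum_divide_distrib by (intro sum.cong) auto
    also have "\<dots> = (\<Sum>y\<in>S \<inter> {y. E x y}. w x y * (\<rho> x y)\<^sup>2) / L\<^sup>2"
      using S by (simp add: sum.inter_restrict)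
    also have "\<dots> \<le> (\<Sum>y\<in>{y. E x y}. w x y * (\<rho> x y)\<^sup>2) / L\<^sup>2"
      by (intro divide_right_mono sum_mono2 finite_neighbours)
        (auto simp: less_imp_le[OF weight_pos])
    also have "\<dots> \<le> m x / L\<^sup>2"
      by (intro divide_right_mono intrinsic_sum_le) simp
    finally show ?thesis .
  qed
  then have "(\<Sum>x\<in>S. h x * (\<Sum>y\<in>S. if E x y then w x y * (\<phi> y - \<phi> x)\<^sup>2 else 0))
      \<le> (\<Sum>x\<in>S. h x * (m x / L\<^sup>2))"
    by (intro sum_mono mult_left_mono h)
  then show ?thesis
    unfolding edge_sum_def
    by (simp add: sum_distrib_left sum_divide_distrib algebra_simps if_distrib cong: if_cong)
qed

lemma edge_sum_lipschitz_sym_le: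
  assumes "finite S" "0 < L" "\<And>x y. \<bar>\<phi> y - \<phi> x\<bar> \<le> \<rho> x y / L" "\<And>x. 0 \<le> h x"
  shows "edge_sum S (\<lambda>x y. (\<phi> y - \<phi> x)\<^sup>2 * (h x + h y)) \<le> 2 / L\<^sup>2 * (\<Sum>x\<in>S. h x * m x)"
proof -
  have "edge_sum S (\<lambda>x y. (\<phi> y - \<phi> x)\<^sup>2 * (h x + h y))
      = edge_sum S (\<lambda>x y. (\<phi> y - \<phi> x)\<^sup>2 * h x) + edge_sum S (\<lambda>x y. (\<phi> y - \<phi> x)\<^sup>2 * h y)"
    unfolding edge_sum_add[symmetric] by (simp add: distrib_left)
  also have "edge_sum S (\<lambda>x y. (\<phi> y - \<phi> x)\<^sup>2 * h y) = edge_sum S (\<lambda>x y. (\<phi> y - \<phi> x)\<^sup>2 * h x)"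
    using edge_sum_swap[of S "\<lambda>x y. (\<phi> y - \<phi> x)\<^sup>2 * h x"] by (simp add: power2_commute)
  also have "edge_sum S (\<lambda>x y. (\<phi> y - \<phi> x)\<^sup>2 * h x) \<le> (\<Sum>x\<in>S. h x * m x) / L\<^sup>2"
    by (rule edge_sum_lipschitz_le[OF assms])
  finally show ?thesis
    by simp
qed

definition cutoff :: "real \<Rightarrow> real \<Rightarrow> 'a \<Rightarrow> real" where
  "cutoff r L x = max 0 (min 1 ((r + L - \<rho> x x0) / L))"

lemma cutoff_nonneg: "0 \<le> cutoff r L x"
  unfolding cutoff_def by simp

lemma cutoff_le_one: "cutoff r L x \<le> 1"
  unfolding cutoff_def by simp

lemma cutoff_eq_one: "0 < L \<Longrightarrow> x \<in> B r \<Longrightarrow> cutoff r L x = 1"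
  unfolding cutoff_def ball_def by (simp add: field_simps)

lemma cutoff_eq_zero: "0 < L \<Longrightarrow> x \<notin> B (r + L) \<Longrightarrow> cutoff r L x = 0"
  unfolding cutoff_def ball_def by (simp add: field_simps)

lemma cutoff_lipschitz:
  assumes "0 < L"
  shows "\<bar>cutoff r L y - cutoff r L x\<bar> \<le> \<rho> x y / L"
proof -
  have clamp: "\<bar>max 0 (min 1 a) - max 0 (min 1 b)\<bar> \<le> \<bar>a - b\<bar>" for a b :: real
    unfolding max_def min_def by (auto simp: abs_if)
  have "\<bar>\<rho> x x0 - \<rho> y x0\<bar> \<le> \<rho> x y"
    using rho_triangle[of x x0 y] rho_triangle[of y x0 x] rho_sym[of y x] by linarith
  then have "\<bar>(r + L - \<rho> y x0) / L - (r + L - \<rho> x x0) / L\<bar> \<le> \<rho> x y / L"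
    using assms by (simp add: diff_divide_distrib[symmetric] abs_divide divide_right_mono)
  then show ?thesis
    unfolding cutoff_def using clamp order_trans by blast
qed

lemma cutoff_edge:
  assumes "0 < L" "E x y" "cutoff r L y \<noteq> cutoff r L x"
  shows "x \<in> B (r + L + s)"
proof (rule ccontr)
  assume x: "x \<notin> B (r + L + s)"
  then have "x \<notin> B (r + L)"
    using ball_mono[of "r + L" "r + L + s"] jump_nonneg by auto
  moreover have "y \<notin> B (r + L)"
    using x edge_in_ball[OF edge_sym[OF assms(2)]] by auto
  ultimately show False
    using assms cutoff_eq_zero by auto
qed

lemma green_cutoff:
  assumes S: "finite S" "B (r + L + s) \<subseteq> S" and L: "0 < L"
  shows "(\<Sum>x\<in>S. (cutoff r L x)\<^sup>2 * v x * (m x * laplacian E w m f x))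
    = - edge_sum S (\<lambda>x y. ((cutoff r L y)\<^sup>2 * v y - (cutoff r L x)\<^sup>2 * v x) * (f y - f x)) / 2"
proof (rule green_formula[OF S(1)])
  fix x assume "(cutoff r L x)\<^sup>2 * v x \<noteq> 0"
  then have "x \<in> B (r + L)"
    using cutoff_eq_zero[OF L] by fastforce
  moreover have "B (r + L) \<subseteq> S"
    using S(2) ball_mono[of "r + L" "r + L + s"] jump_nonneg by auto
  ultimately show "x \<in> S \<and> {y. E x y} \<subseteq> S"
    using S(2) edge_in_ball[of x _ "r + L"] by auto
qed

lemma cutoff_mass_le:
  assumes S: "finite S" "B (r + L + s) \<subseteq> S" and L: "0 < L"
  shows "(\<Sum>x\<in>S. m x * (cutoff r L x)\<^sup>2 * (f x)\<^sup>2) \<le> ball_L2 (r + L + s) f"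
  unfolding ball_L2_eq_sum_if[OF S]
proof (rule sum_mono)
  fix x
  show "m x * (cutoff r L x)\<^sup>2 * (f x)\<^sup>2 \<le> (if x \<in> B (r + L + s) then m x * (f x)\<^sup>2 else 0)"
  proof (cases "x \<in> B (r + L + s)")
    case True
    have "(cutoff r L x)\<^sup>2 \<le> 1"
      using cutoff_nonneg cutoff_le_one by (simp add: power_le_one)
    then show ?thesis
      using True measure_pos[of x] mult_right_mono[of "(cutoff r L x)\<^sup>2" 1 "m x * (f x)\<^sup>2"]
      by (simp add: mult_ac)
  next
    case False
    then have "x \<notin> B (r + L)"
      using ball_mono[of "r + L" "r + L + s"] jump_nonneg by auto
    then show ?thesis
      using False cutoff_eq_zero[OF L] by simp
  qed
qed

lemma ball_L2_le_cutoff_mass: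
  assumes S: "finite S" "B r \<subseteq> S" and L: "0 < L"
  shows "ball_L2 r f \<le> (\<Sum>x\<in>S. m x * (cutoff r L x)\<^sup>2 * (f x)\<^sup>2)"
proof -
  have "ball_L2 r f = (\<Sum>x\<in>B r. m x * (cutoff r L x)\<^sup>2 * (f x)\<^sup>2)"
    unfolding ball_L2_def by (intro sum.cong) (auto simp: cutoff_eq_one[OF L])
  also have "\<dots> \<le> (\<Sum>x\<in>S. m x * (cutoff r L x)\<^sup>2 * (f x)\<^sup>2)"
    using S by (intro sum_mono2) (auto simp: less_imp_le[OF measure_pos])
  finally show ?thesis .
qed

definition dirichlet_energy :: "'a set \<Rightarrow> real \<Rightarrow> ('a \<Rightarrow> real) \<Rightarrow> real" where
  "dirichlet_energy S r f = edge_sum S (\<lambda>x y. if x \<in> B r then (f y - f x)\<^sup>2 else 0)"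

definition cutoff_energy :: "'a set \<Rightarrow> real \<Rightarrow> real \<Rightarrow> ('a \<Rightarrow> real) \<Rightarrow> real" where
  "cutoff_energy S r L f = edge_sum S (\<lambda>x y. cutoff r L x * cutoff r L y * (f y - f x)\<^sup>2)"

lemma caccioppoli_step:
  assumes S: "finite S" "B (r + L + s) \<subseteq> S" and L: "0 < L"
    and eq: "\<And>x. b x - a x = laplacian E w m b x"
  shows "(\<Sum>x\<in>S. m x * (cutoff r L x)\<^sup>2 * (b x)\<^sup>2) - (\<Sum>x\<in>S. m x * (cutoff r L x)\<^sup>2 * (a x)\<^sup>2)
      + dirichlet_energy S r b / 4
    \<le> 2 / L\<^sup>2 * ball_L2 (r + L + s) b"
proof -
  define \<phi> where "\<phi> = cutoff r L"
  define h where "h x = (if x \<in> B (r + L + s) then (b x)\<^sup>2 else 0)" for x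
  have "m x * (\<phi> x)\<^sup>2 * (b x)\<^sup>2 - m x * (\<phi> x)\<^sup>2 * (a x)\<^sup>2
      \<le> 2 * ((\<phi> x)\<^sup>2 * b x * (m x * laplacian E w m b x))" for x
  proof -
    have "m x * (\<phi> x)\<^sup>2 * (b x)\<^sup>2 - m x * (\<phi> x)\<^sup>2 * (a x)\<^sup>2
        = 2 * ((\<phi> x)\<^sup>2 * b x * (m x * (b x - a x))) - m x * (\<phi> x)\<^sup>2 * (b x - a x)\<^sup>2"
      by (simp add: power2_eq_square algebra_simps)
    moreover have "0 \<le> m x * (\<phi> x)\<^sup>2 * (b x - a x)\<^sup>2"
      using measure_pos[of x] by simp
    ultimately show ?thesis
      by (simp add: eq)
  qed
  then have "(\<Sum>x\<in>S. m x * (\<phi> x)\<^sup>2 * (b x)\<^sup>2) - (\<Sum>x\<in>S. m x * (\<phi> x)\<^sup>2 * (a x)\<^sup>2)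
      \<le> 2 * (\<Sum>x\<in>S. (\<phi> x)\<^sup>2 * b x * (m x * laplacian E w m b x))"
    by (simp add: sum_distrib_left sum_subtractf[symmetric] sum_mono)
  also have "\<dots> = - edge_sum S (\<lambda>x y. ((\<phi> y)\<^sup>2 * b y - (\<phi> x)\<^sup>2 * b x) * (b y - b x))"
    using green_cutoff[OF S L, of b b] by (simp add: \<phi>_def)
  also have "\<dots> \<le> 2 / L\<^sup>2 * ball_L2 (r + L + s) b - dirichlet_energy S r b / 4"
  proof -
    have "edge_sum S (\<lambda>x y. 1 / 4 * (if x \<in> B r then (b y - b x)\<^sup>2 else 0) - (\<phi> y - \<phi> x)\<^sup>2 * (h x + h y))
        \<le> edge_sum S (\<lambda>x y. ((\<phi> y)\<^sup>2 * b y - (\<phi> x)\<^sup>2 * b x) * (b y - b x))"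
    proof (rule edge_sum_mono)
      fix x y assume "E x y"
      have "1 / 4 * (if x \<in> B r then (b y - b x)\<^sup>2 else 0) \<le> ((\<phi> x)\<^sup>2 + (\<phi> y)\<^sup>2) / 4 * (b y - b x)\<^sup>2"
        using cutoff_eq_one[OF L, of x r] by (simp add: \<phi>_def field_simps)
      moreover have "(\<phi> y - \<phi> x)\<^sup>2 * (h x + h y) = (\<phi> y - \<phi> x)\<^sup>2 * ((b x)\<^sup>2 + (b y)\<^sup>2)"
        using cutoff_edge[OF L \<open>E x y\<close>, of r] cutoff_edge[OF L edge_sym[OF \<open>E x y\<close>], of r]
        by (cases "\<phi> y = \<phi> x") (auto simp: h_def \<phi>_def)
      ultimately show "1 / 4 * (if x \<in> B r then (b y - b x)\<^sup>2 else 0) - (\<phi> y - \<phi> x)\<^sup>2 * (h x + h y)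
          \<le> ((\<phi> y)\<^sup>2 * b y - (\<phi> x)\<^sup>2 * b x) * (b y - b x)"
        using product_rule_energy_ineq[where a = "\<phi> x" and b = "\<phi> y" and p = "b x" and q = "b y"]
        by linarith
    qed
    moreover have "edge_sum S (\<lambda>x y. (\<phi> y - \<phi> x)\<^sup>2 * (h x + h y)) \<le> 2 / L\<^sup>2 * ball_L2 (r + L + s) b"
    proof -
      have "(\<Sum>x\<in>S. h x * m x) = ball_L2 (r + L + s) b"
        unfolding ball_L2_eq_sum_if[OF S] h_def by (intro sum.cong) auto
      then show ?thesis
        using edge_sum_lipschitz_sym_le[OF S(1) L cutoff_lipschitz[OF L], of h] unfolding \<phi>_def
        by (simp add: h_def)
    qed
    ultimately show ?thesis
      unfolding dirichlet_energy_def edge_sum_diff edge_sum_cmult by linarith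
  qed
  finally show ?thesis
    unfolding \<phi>_def by linarith
qed

lemma time_derivative_step:
  assumes S: "finite S" "B (r + L + s) \<subseteq> S" and L: "0 < L"
    and eq: "\<And>x. b x - a x = laplacian E w m b x"
  shows "(\<Sum>x\<in>S. m x * (cutoff r L x)\<^sup>2 * (b x - a x)\<^sup>2)
    \<le> (cutoff_energy S r L a - cutoff_energy S r L b) / 2 + dirichlet_energy S (r + L + s) b / L\<^sup>2"
proof -
  define \<phi> where "\<phi> = cutoff r L"
  define v where "v x = b x - a x" for x
  define h where "h x = (\<phi> x)\<^sup>2 * (v x)\<^sup>2" for x
  define H where "H = (\<Sum>x\<in>S. m x * (\<phi> x)\<^sup>2 * (v x)\<^sup>2)"
  define X where "X = edge_sum S (\<lambda>x y. ((\<phi> y)\<^sup>2 * v y - (\<phi> x)\<^sup>2 * v x) * (b y - b x))"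
  have \<phi>_nonneg: "0 \<le> \<phi> x" for x
    unfolding \<phi>_def by (rule cutoff_nonneg)
  have "H = (\<Sum>x\<in>S. (\<phi> x)\<^sup>2 * v x * (m x * laplacian E w m b x))"
    unfolding H_def by (intro sum.cong refl) (simp add: v_def eq[symmetric] power2_eq_square algebra_simps)
  then have H: "H = - X / 2"
    using green_cutoff[OF S L, of v b] by (simp add: \<phi>_def X_def)
  have "edge_sum S (\<lambda>x y. 1 / 2 * (\<phi> x * \<phi> y * (b y - b x)\<^sup>2) - 1 / 2 * (\<phi> x * \<phi> y * (a y - a x)\<^sup>2)
      - L\<^sup>2 / 2 * ((\<phi> y - \<phi> x)\<^sup>2 * (h x + h y))
      - 1 / L\<^sup>2 * (if x \<in> B (r + L + s) then (b y - b x)\<^sup>2 else 0)) \<le> X"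
    unfolding X_def
  proof (rule edge_sum_mono)
    fix x y assume "E x y"
    have "(if \<phi> y = \<phi> x then 0 else (b y - b x)\<^sup>2 / L\<^sup>2)
        \<le> 1 / L\<^sup>2 * (if x \<in> B (r + L + s) then (b y - b x)\<^sup>2 else 0)"
      using cutoff_edge[OF L \<open>E x y\<close>, of r] by (auto simp: \<phi>_def)
    then show "1 / 2 * (\<phi> x * \<phi> y * (b y - b x)\<^sup>2) - 1 / 2 * (\<phi> x * \<phi> y * (a y - a x)\<^sup>2)
        - L\<^sup>2 / 2 * ((\<phi> y - \<phi> x)\<^sup>2 * (h x + h y))
        - 1 / L\<^sup>2 * (if x \<in> B (r + L + s) then (b y - b x)\<^sup>2 else 0)
      \<le> ((\<phi> y)\<^sup>2 * v y - (\<phi> x)\<^sup>2 * v x) * (b y - b x)"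
      using product_rule_time_derivative_ineq[where fx = "\<phi> x" and fy = "\<phi> y" and ax = "a x"
          and ay = "a y" and bx = "b x" and by' = "b y" and L = L, OF \<phi>_nonneg \<phi>_nonneg L]
      unfolding h_def v_def by linarith
  qed
  moreover have "L\<^sup>2 / 2 * edge_sum S (\<lambda>x y. (\<phi> y - \<phi> x)\<^sup>2 * (h x + h y)) \<le> H"
  proof -
    have "edge_sum S (\<lambda>x y. (\<phi> y - \<phi> x)\<^sup>2 * (h x + h y)) \<le> 2 / L\<^sup>2 * H"
      using edge_sum_lipschitz_sym_le[OF S(1) L cutoff_lipschitz[OF L], of h]
      unfolding H_def h_def \<phi>_def by (simp add: mult_ac)
    then show ?thesis
      using L mult_left_mono[of _ "2 / L\<^sup>2 * H" "L\<^sup>2 / 2"] by simp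
  qed
  ultimately have "H \<le> (cutoff_energy S r L a - cutoff_energy S r L b) / 2 + dirichlet_energy S (r + L + s) b / L\<^sup>2"
    unfolding H cutoff_energy_def dirichlet_energy_def edge_sum_diff edge_sum_cmult \<phi>_def
    by (simp add: field_simps)
  then show ?thesis
    unfolding H_def v_def \<phi>_def .
qed

lemma caccioppoli_sum:
  assumes S: "finite S" "B (r + L + s) \<subseteq> S" and L: "0 < L"
    and sol: "\<And>n x. n \<in> {1..T} \<Longrightarrow> U n x - U (n - 1) x = laplacian E w m (U n) x"
  shows "(\<Sum>n\<in>{1..T}. real n * dirichlet_energy S r (U n))
    \<le> 4 * (1 + 2 / L\<^sup>2 * real T) * (\<Sum>n\<le>T. ball_L2 (r + L + s) (U n))"
proof (rule sum_linear_weight_le[where F = "\<lambda>n. \<Sum>x\<in>S. m x * (cutoff r L x)\<^sup>2 * (U n x)\<^sup>2"])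
  show "(\<Sum>x\<in>S. m x * (cutoff r L x)\<^sup>2 * (U n x)\<^sup>2) - (\<Sum>x\<in>S. m x * (cutoff r L x)\<^sup>2 * (U (n - 1) x)\<^sup>2)
      + dirichlet_energy S r (U n) / 4 \<le> 2 / L\<^sup>2 * ball_L2 (r + L + s) (U n)" if "n \<in> {1..T}" for n
    by (rule caccioppoli_step[OF S L sol[OF that]])
  show "0 \<le> (\<Sum>x\<in>S. m x * (cutoff r L x)\<^sup>2 * (U n x)\<^sup>2)" for n
    by (intro sum_nonneg) (simp add: less_imp_le[OF measure_pos])
  show "(\<Sum>x\<in>S. m x * (cutoff r L x)\<^sup>2 * (U n x)\<^sup>2) \<le> ball_L2 (r + L + s) (U n)" for n
    by (rule cutoff_mass_le[OF S L])
qed simp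

lemma time_derivative_sum:
  assumes S: "finite S" "B (r + 2 * (L + s)) \<subseteq> S" and L: "0 < L"
    and sol: "\<And>n x. n \<in> {1..T} \<Longrightarrow> U n x - U (n - 1) x = laplacian E w m (U n) x"
  shows "(\<Sum>n\<in>{1..T}. real n * (real n - 1) * ball_L2 r (\<lambda>x. U n x - U (n - 1) x))
    \<le> 4 * (1 + 1 / L\<^sup>2 * real T) * (1 + 2 / L\<^sup>2 * real T) * (\<Sum>n\<le>T. ball_L2 (r + 2 * (L + s)) (U n))"
proof -
  have S1: "B (r + L + s) \<subseteq> S" and S0: "B r \<subseteq> S"
    using S(2) ball_mono[of "r + L + s" "r + 2 * (L + s)"] ball_mono[of r "r + L + s"] jump_nonneg L
    by auto
  have "(\<Sum>n\<in>{1..T}. real n * (real n - 1) * ball_L2 r (\<lambda>x. U n x - U (n - 1) x))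
      \<le> (1 + 1 / L\<^sup>2 * real T) * (\<Sum>n\<in>{1..T}. real n * dirichlet_energy S (r + L + s) (U n))"
  proof (rule sum_quadratic_weight_le[where J = "\<lambda>n. cutoff_energy S r L (U n)"])
    show "ball_L2 r (\<lambda>x. U n x - U (n - 1) x)
      \<le> (cutoff_energy S r L (U (n - 1)) - cutoff_energy S r L (U n)) / 2
        + 1 / L\<^sup>2 * dirichlet_energy S (r + L + s) (U n)" if "n \<in> {1..T}" for n
      using ball_L2_le_cutoff_mass[OF S(1) S0 L, of "\<lambda>x. U n x - U (n - 1) x"]
        time_derivative_step[OF S(1) S1 L sol[OF that]] by simp
    show "0 \<le> cutoff_energy S r L (U n)" for n
      unfolding cutoff_energy_def by (intro edge_sum_nonneg) (simp add: cutoff_nonneg)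
    show "cutoff_energy S r L (U n) \<le> dirichlet_energy S (r + L + s) (U n)" for n
      unfolding cutoff_energy_def dirichlet_energy_def
    proof (rule edge_sum_mono)
      fix x y
      have "cutoff r L x * cutoff r L y \<le> 1"
        by (intro mult_le_one cutoff_le_one cutoff_nonneg)
      moreover have "x \<notin> B (r + L + s) \<Longrightarrow> cutoff r L x = 0"
        using cutoff_eq_zero[OF L] ball_mono[of "r + L" "r + L + s"] jump_nonneg by auto
      ultimately show "cutoff r L x * cutoff r L y * (U n y - U n x)\<^sup>2
          \<le> (if x \<in> B (r + L + s) then (U n y - U n x)\<^sup>2 else 0)"
        using mult_right_mono[of "cutoff r L x * cutoff r L y" 1 "(U n y - U n x)\<^sup>2"] by auto
    qed
  qed simp
  also have "\<dots> \<le> (1 + 1 / L\<^sup>2 * real T) * (4 * (1 + 2 / L\<^sup>2 * real T) * (\<Sum>n\<le>T. ball_L2 (r + 2 * (L + s)) (U n)))"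
  proof (rule mult_left_mono)
    have radius: "r + L + s + L + s = r + 2 * (L + s)"
      by simp
    show "(\<Sum>n\<in>{1..T}. real n * dirichlet_energy S (r + L + s) (U n))
        \<le> 4 * (1 + 2 / L\<^sup>2 * real T) * (\<Sum>n\<le>T. ball_L2 (r + 2 * (L + s)) (U n))"
      using caccioppoli_sum[of S "r + L + s" L T U] S L sol unfolding radius by blast
  qed simp
  finally show ?thesis
    by (simp only: mult_ac)
qed

lemma cylinder_L2_Dt_le:
  assumes anc: "ancient_solution E w m h" and T: "1 \<le> T"
    and L: "0 < L" "s \<le> L" "2 * real T + 1 \<le> L\<^sup>2"
  shows "(real T)\<^sup>2 * cylinder_L2 (Dt h) r T \<le> 24 * cylinder_L2 h (r + 4 * L) (4 * T)"
proof -
  define N where "N = 2 * T + 1"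
  define U where "U n x = h x (int n - int N)" for n x
  define R where "R = r + 2 * (L + s)"
  have U_diff: "U n x - U (n - 1) x = Dt h x (int n - int N)" if "1 \<le> n" for n x
    using that by (simp add: U_def Dt_def of_nat_diff algebra_simps)
  have sol: "U n x - U (n - 1) x = laplacian E w m (U n) x" if "n \<in> {1..N}" for n x
  proof -
    have "U n x - U (n - 1) x = Dt h x (int n - int N)"
      using that by (intro U_diff) simp
    also have "\<dots> = laplacian E w m (\<lambda>y. h y (int n - int N)) x"
      using anc that unfolding ancient_solution_def by simp
    finally show ?thesis
      unfolding U_def by simp
  qed
  have "(real T)\<^sup>2 * cylinder_L2 (Dt h) r T
      = (\<Sum>t\<in>{int (T + 1) - int N..0}. (real T)\<^sup>2 * ball_L2 r (\<lambda>x. Dt h x t))"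
    unfolding cylinder_L2_def sum_distrib_left N_def by simp
  also have "\<dots> = (\<Sum>n\<in>{T + 1..N}. (real T)\<^sup>2 * ball_L2 r (\<lambda>x. Dt h x (int n - int N)))"
    by (rule sum_shift_nonpos[symmetric]) (simp add: N_def)
  also have "\<dots> = (\<Sum>n\<in>{T + 1..N}. (real T)\<^sup>2 * ball_L2 r (\<lambda>x. U n x - U (n - 1) x))"
    by (intro sum.cong refl) (simp add: U_diff[symmetric])
  also have "\<dots> \<le> (\<Sum>n\<in>{T + 1..N}. real n * (real n - 1) * ball_L2 r (\<lambda>x. U n x - U (n - 1) x))"
  proof (intro sum_mono mult_right_mono ball_L2_nonneg)
    fix n assume "n \<in> {T + 1..N}"
    then show "(real T)\<^sup>2 \<le> real n * (real n - 1)"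
      unfolding power2_eq_square by (intro mult_mono) auto
  qed
  also have "\<dots> \<le> (\<Sum>n\<in>{1..N}. real n * (real n - 1) * ball_L2 r (\<lambda>x. U n x - U (n - 1) x))"
    by (intro sum_mono2) (auto intro!: mult_nonneg_nonneg ball_L2_nonneg)
  also have "\<dots> \<le> 4 * (1 + 1 / L\<^sup>2 * real N) * (1 + 2 / L\<^sup>2 * real N) * (\<Sum>n\<le>N. ball_L2 R (U n))"
    unfolding R_def by (rule time_derivative_sum[where U = U, OF finite_ball order_refl L(1) sol])
  also have "\<dots> \<le> 24 * (\<Sum>n\<le>N. ball_L2 R (U n))"
  proof (intro mult_right_mono sum_nonneg ball_L2_nonneg)
    have "1 / L\<^sup>2 * real N \<le> 1"
      using L unfolding N_def by simp
    then have "(1 + 1 / L\<^sup>2 * real N) * (1 + 2 / L\<^sup>2 * real N) \<le> 2 * 3"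
      by (intro mult_mono) auto
    then show "4 * (1 + 1 / L\<^sup>2 * real N) * (1 + 2 / L\<^sup>2 * real N) \<le> 24"
      by (simp only: mult.assoc)
  qed
  also have "(\<Sum>n\<le>N. ball_L2 R (U n)) = cylinder_L2 h R N"
    unfolding cylinder_L2_def U_def atMost_atLeast0
    using sum_shift_nonpos[of 0 N "\<lambda>t. ball_L2 R (\<lambda>x. h x t)"] by simp
  also have "24 * cylinder_L2 h R N \<le> 24 * cylinder_L2 h (r + 4 * L) (4 * T)"
    using L T unfolding R_def N_def by (intro mult_left_mono cylinder_L2_mono) auto
  finally show ?thesis .
qed

lemma cylinder_L2_Dt_funpow_le:
  assumes anc: "ancient_solution E w m h" and T: "1 \<le> T"
    and L: "0 < L" "s \<le> L" "2 * 4 ^ j * real T + 1 \<le> L\<^sup>2"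
  shows "real T ^ (2 * j) * cylinder_L2 ((Dt ^^ j) h) r T \<le> 24 ^ j * cylinder_L2 h (r + 4 * real j * L) (4 ^ j * T)"
  using anc L(3)
proof (induction j arbitrary: h)
  case (Suc j)
  define r' where "r' = r + 4 * real j * L"
  have "2 * 4 ^ j * real T \<le> 2 * 4 ^ Suc j * real T"
    by simp
  then have L': "2 * 4 ^ j * real T + 1 \<le> L\<^sup>2"
    using Suc.prems(2) by linarith
  have "1 * real T \<le> 4 ^ j * real T"
    by (intro mult_right_mono) auto
  then have T': "real T \<le> real (4 ^ j * T)"
    by simp
  have "real T ^ (2 * Suc j) * cylinder_L2 ((Dt ^^ Suc j) h) r T
      = (real T)\<^sup>2 * (real T ^ (2 * j) * cylinder_L2 ((Dt ^^ j) (Dt h)) r T)"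
    by (simp add: funpow_Suc_right power_add power_mult mult_ac power2_eq_square del: funpow.simps)
  also have "\<dots> \<le> (real T)\<^sup>2 * (24 ^ j * cylinder_L2 (Dt h) r' (4 ^ j * T))"
    using Suc.IH[OF ancient_solution_Dt[OF Suc.prems(1)] L'] unfolding r'_def
    by (intro mult_left_mono) auto
  also have "\<dots> \<le> 24 ^ j * ((real (4 ^ j * T))\<^sup>2 * cylinder_L2 (Dt h) r' (4 ^ j * T))"
    using T' by (simp add: mult_left_mono mult_right_mono cylinder_L2_nonneg power_mono mult.left_commute)
  also have "\<dots> \<le> 24 ^ j * (24 * cylinder_L2 h (r' + 4 * L) (4 * (4 ^ j * T)))"
    using cylinder_L2_Dt_le[OF Suc.prems(1) _ L(1,2), of "4 ^ j * T" r'] T L'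
    by (intro mult_left_mono) (auto simp: mult_ac)
  also have "\<dots> = 24 ^ Suc j * cylinder_L2 h (r + 4 * real (Suc j) * L) (4 ^ Suc j * T)"
    unfolding r'_def by (simp add: algebra_simps)
  finally show ?case .
qed simp

lemma cylinder_L2_growth_le:
  assumes bnd: "\<forall>R>0. \<forall>y\<in>ball \<rho> x1 R. \<forall>t::int. - (R\<^sup>2) \<le> real_of_int t \<and> t \<le> 0 \<longrightarrow> \<bar>u y t\<bar> \<le> Cu * (1 + R) powr k"
    and vol: "\<forall>R>0. sum m (B R) \<le> C * (1 + R) powr \<alpha>"
    and R: "0 < R" "real N \<le> R\<^sup>2"
  shows "cylinder_L2 u R N \<le> (real N + 1) * (C * (1 + R) powr \<alpha>) * (Cu * (1 + (R + \<rho> x0 x1)) powr k)\<^sup>2"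
proof -
  define M where "M = Cu * (1 + (R + \<rho> x0 x1)) powr k"
  have "(u y t)\<^sup>2 \<le> M\<^sup>2" if y: "y \<in> B R" and t: "t \<in> {- int N..0}" for y t
  proof -
    have "y \<in> ball \<rho> x1 (R + \<rho> x0 x1)"
      using y rho_triangle[of y x1 x0] unfolding ball_def by auto
    moreover have "- ((R + \<rho> x0 x1)\<^sup>2) \<le> real_of_int t"
    proof -
      have "R\<^sup>2 \<le> (R + \<rho> x0 x1)\<^sup>2"
        using R rho_nonneg[of x0 x1] by (intro power_mono) auto
      moreover have "real_of_int (- int N) \<le> real_of_int t"
        using t by (simp only: of_int_le_iff) simp
      ultimately show ?thesis
        using R(2) by simp
    qed
    moreover have "0 < R + \<rho> x0 x1"
      using R(1) rho_nonneg[of x0 x1] by linarith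
    ultimately have "\<bar>u y t\<bar> \<le> M"
      unfolding M_def using bnd t by simp
    then show ?thesis
      using abs_le_square_iff by fastforce
  qed
  then have "cylinder_L2 u R N \<le> (\<Sum>t\<in>{- int N..0}. \<Sum>y\<in>B R. m y * M\<^sup>2)"
    unfolding cylinder_L2_def ball_L2_def
    by (intro sum_mono mult_left_mono) (auto simp: less_imp_le[OF measure_pos])
  also have "\<dots> = (real N + 1) * (M\<^sup>2 * sum m (B R))"
    by (simp add: sum_distrib_right[symmetric] mult_ac)
  also have "\<dots> \<le> (real N + 1) * (M\<^sup>2 * (C * (1 + R) powr \<alpha>))"
    using vol R by (intro mult_left_mono) auto
  finally show ?thesis
    unfolding M_def by (simp add: mult_ac)
qed

lemma cylinder_L2_polynomial_growth:
  assumes bnd: "\<forall>R>0. \<forall>y\<in>ball \<rho> x1 R. \<forall>t::int. - (R\<^sup>2) \<le> real_of_int t \<and> t \<le> 0 \<longrightarrow> \<bar>u y t\<bar> \<le> Cu * (1 + R) powr k"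
    and vol: "\<forall>R>0. sum m (B R) \<le> C * (1 + R) powr \<alpha>"
    and c: "1 \<le> c" "real A \<le> c\<^sup>2"
  shows "\<exists>K. \<forall>n. 1 \<le> n \<longrightarrow> cylinder_L2 u (c * real n) (A * n\<^sup>2) \<le> K * real n powr (2 + \<alpha> + 2 * k)"
proof -
  define d where "d = \<rho> x0 x1"
  define K\<^sub>\<alpha> where "K\<^sub>\<alpha> = max 1 ((1 + c) powr \<alpha>)"
  define K\<^sub>k where "K\<^sub>k = max 1 ((1 + c + d) powr k)"
  have d: "0 \<le> d"
    unfolding d_def by (rule rho_nonneg)
  have "\<bar>u x1 0\<bar> \<le> Cu * 2 powr k"
    using bnd[rule_format, of 1 x1 0] by (simp add: ball_def rho_refl)
  then have "0 \<le> Cu * 2 powr k"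
    using abs_ge_zero[of "u x1 0"] by linarith
  then have Cu: "0 \<le> Cu"
    by (simp add: zero_le_mult_iff)
  have "0 \<le> sum m (B 1)"
    by (intro sum_nonneg) (simp add: less_imp_le[OF measure_pos])
  then have "0 \<le> C * 2 powr \<alpha>"
    using vol[rule_format, of 1] by simp
  then have C: "0 \<le> C"
    by (simp add: zero_le_mult_iff)
  have "cylinder_L2 u (c * real n) (A * n\<^sup>2) \<le> (real (A + 1) * C * K\<^sub>\<alpha> * Cu\<^sup>2 * K\<^sub>k\<^sup>2) * real n powr (2 + \<alpha> + 2 * k)"
    if n: "1 \<le> n" for n
  proof -
    have n': "1 \<le> real n"
      using n by simp
    have "real (A * n\<^sup>2) \<le> (c * real n)\<^sup>2"
      using c mult_right_mono[of "real A" "c\<^sup>2" "(real n)\<^sup>2"] by (simp add: power_mult_distrib)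
    then have "cylinder_L2 u (c * real n) (A * n\<^sup>2)
        \<le> (real (A * n\<^sup>2) + 1) * (C * (1 + c * real n) powr \<alpha>) * (Cu * (1 + c * real n + d) powr k)\<^sup>2"
      using cylinder_L2_growth_le[OF bnd vol, of "c * real n" "A * n\<^sup>2"] c n' unfolding d_def
      by (simp add: add.assoc)
    also have "\<dots> \<le> (real (A + 1) * real n powr 2) * (C * (K\<^sub>\<alpha> * real n powr \<alpha>)) * (Cu * (K\<^sub>k * real n powr k))\<^sup>2"
    proof (intro mult_mono power_mono mult_left_mono)
      have "real A * (real n)\<^sup>2 + 1 \<le> real A * (real n)\<^sup>2 + (real n)\<^sup>2"
        using n' by simp
      then show "real (A * n\<^sup>2) + 1 \<le> real (A + 1) * real n powr 2"
        using n' by (simp add: algebra_simps)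
    qed (use n' c d C Cu powr_affine_le[of "real n" c 0 \<alpha>] powr_affine_le[of "real n" c d k]
        in \<open>auto simp: K\<^sub>\<alpha>_def K\<^sub>k_def\<close>)
    also have "\<dots> = (real (A + 1) * C * K\<^sub>\<alpha> * Cu\<^sup>2 * K\<^sub>k\<^sup>2) * real n powr (2 + \<alpha> + 2 * k)"
    proof -
      have "real n powr (2 + \<alpha> + 2 * k) = real n powr 2 * real n powr \<alpha> * (real n powr k)\<^sup>2"
        by (simp add: powr_add power2_eq_square flip: powr_add[of "real n" k k] mult_2)
      then show ?thesis
        unfolding power_mult_distrib by (simp only: mult_ac)
    qed
    finally show ?thesis .
  qed
  then show ?thesis
    by blast
qed

lemma Dt_funpow_rescaled_le:
  assumes anc: "ancient_solution E w m u" and n: "1 \<le> n" "s \<le> real n" "\<rho> x x0 \<le> real n"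
    and t: "- int n \<le> t" "t \<le> 0"
  shows "real n ^ (4 * q) * (m x * ((Dt ^^ q) u x t)\<^sup>2)
    \<le> 24 ^ q * cylinder_L2 u ((1 + 4 * real q) * 2 ^ (q + 1) * real n) (4 ^ q * n\<^sup>2)"
proof -
  \<comment> \<open>With \<open>T = n\<^sup>2\<close>, this width satisfies \<open>2 \<cdot> 4\<^sup>q T + 1 \<le> L\<^sup>2\<close>, as \<open>q\<close> iterations require.\<close>
  define L where "L = 2 ^ (q + 1) * real n"
  have "(1 :: real) \<le> 2 ^ (q + 1)"
    by (rule one_le_power) simp
  then have Ln: "real n \<le> L"
    unfolding L_def using mult_right_mono[of 1 "2 ^ (q + 1)" "real n"] by simp
  have L2: "L\<^sup>2 = 4 * 4 ^ q * (real n)\<^sup>2"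
    unfolding L_def by (simp add: power2_eq_square power_mult_distrib[symmetric] algebra_simps)
  have scale: "2 * 4 ^ q * real (n\<^sup>2) + 1 \<le> L\<^sup>2"
  proof -
    have "1 * 1 \<le> 4 ^ q * (real n)\<^sup>2"
      using n by (intro mult_mono one_le_power) auto
    then show ?thesis
      unfolding L2 of_nat_power by linarith
  qed
  have "1 \<le> n\<^sup>2" "0 < L" "s \<le> L"
    using n Ln by auto
  then have iterated: "real (n\<^sup>2) ^ (2 * q) * cylinder_L2 ((Dt ^^ q) u) L (n\<^sup>2)
      \<le> 24 ^ q * cylinder_L2 u (L + 4 * real q * L) (4 ^ q * n\<^sup>2)"
    by (rule cylinder_L2_Dt_funpow_le[OF anc _ _ _ scale])
  have "m x * ((Dt ^^ q) u x t)\<^sup>2 \<le> cylinder_L2 ((Dt ^^ q) u) L (n\<^sup>2)"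
  proof (rule point_le_cylinder_L2)
    show "x \<in> B L"
      using n Ln unfolding ball_def by simp
    have "n \<le> n\<^sup>2"
      unfolding power2_eq_square by (rule le_square)
    then show "- int (n\<^sup>2) \<le> t"
      using t by linarith
  qed (rule t)
  then have "real n ^ (4 * q) * (m x * ((Dt ^^ q) u x t)\<^sup>2)
      \<le> real n ^ (4 * q) * cylinder_L2 ((Dt ^^ q) u) L (n\<^sup>2)"
    by (intro mult_left_mono) auto
  also have "\<dots> = real (n\<^sup>2) ^ (2 * q) * cylinder_L2 ((Dt ^^ q) u) L (n\<^sup>2)"
    by (simp add: power_mult[symmetric])
  also have "\<dots> \<le> 24 ^ q * cylinder_L2 u (L + 4 * real q * L) (4 ^ q * n\<^sup>2)"
    by (rule iterated)
  also have "L + 4 * real q * L = (1 + 4 * real q) * 2 ^ (q + 1) * real n"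
    by (simp add: L_def algebra_simps)
  finally show ?thesis .
qed

lemma Dt_funpow_eq_zero:
  assumes anc: "ancient_solution E w m u"
    and bnd: "\<forall>R>0. \<forall>y\<in>ball \<rho> x1 R. \<forall>t::int. - (R\<^sup>2) \<le> real_of_int t \<and> t \<le> 0 \<longrightarrow> \<bar>u y t\<bar> \<le> Cu * (1 + R) powr k"
    and vol: "\<forall>R>0. sum m (B R) \<le> C * (1 + R) powr \<alpha>"
    and q: "2 * k + \<alpha> + 2 < 4 * real q" and t: "t \<le> 0"
  shows "(Dt ^^ q) u x t = 0"
proof -
  define a where "a = (Dt ^^ q) u x t"
  define c :: real where "c = (1 + 4 * real q) * 2 ^ (q + 1)"
  define e where "e = 2 + \<alpha> + 2 * k - 4 * real q"
  have c: "1 \<le> c" "real (4 ^ q) \<le> c\<^sup>2"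
  proof -
    have "(1 :: real) \<le> 2 ^ (q + 1)"
      by (rule one_le_power) simp
    then show "1 \<le> c"
      unfolding c_def using mult_mono[of 1 "1 + 4 * real q" 1 "2 ^ (q + 1)"] by simp
    have "((2 :: real) ^ (q + 1))\<^sup>2 = 4 * 4 ^ q"
      by (simp add: power2_eq_square power_mult_distrib[symmetric] algebra_simps)
    then have "real (4 ^ q) \<le> (2 ^ (q + 1))\<^sup>2"
      by simp
    also have "\<dots> \<le> c\<^sup>2"
      unfolding c_def by (intro power_mono) auto
    finally show "real (4 ^ q) \<le> c\<^sup>2" .
  qed
  obtain K where K: "\<And>n. 1 \<le> n \<Longrightarrow> cylinder_L2 u (c * real n) (4 ^ q * n\<^sup>2) \<le> K * real n powr (2 + \<alpha> + 2 * k)"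
    using cylinder_L2_polynomial_growth[OF bnd vol c] by blast
  define N0 where "N0 = max 1 (max (nat (- t)) (max (nat \<lceil>s\<rceil>) (nat \<lceil>\<rho> x x0\<rceil>)))"
  have bound: "m x * a\<^sup>2 \<le> 24 ^ q * K * real n powr e" if "N0 \<le> n" for n
  proof -
    have N0: "1 \<le> n" "nat (- t) \<le> n" "nat \<lceil>s\<rceil> \<le> n" "nat \<lceil>\<rho> x x0\<rceil> \<le> n"
      using that unfolding N0_def by auto
    then have n: "1 \<le> n" "s \<le> real n" "\<rho> x x0 \<le> real n" "- int n \<le> t"
      by (linarith, linarith, linarith, simp add: nat_le_iff)
    have "real n powr (4 * real q) * (m x * a\<^sup>2) = real n ^ (4 * q) * (m x * a\<^sup>2)"
      using n(1) powr_realpow[of "real n" "4 * q"] by simp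
    also have "\<dots> \<le> 24 ^ q * cylinder_L2 u (c * real n) (4 ^ q * n\<^sup>2)"
      unfolding a_def c_def by (rule Dt_funpow_rescaled_le[OF anc n(1-3) n(4) t])
    also have "\<dots> \<le> 24 ^ q * (K * real n powr (2 + \<alpha> + 2 * k))"
      using K[OF n(1)] by (intro mult_left_mono) auto
    also have "\<dots> = real n powr (4 * real q) * (24 ^ q * K * real n powr e)"
    proof -
      have "real n powr (2 + \<alpha> + 2 * k) = real n powr e * real n powr (4 * real q)"
        unfolding e_def by (simp add: powr_add[symmetric])
      then show ?thesis
        by (simp only: mult_ac)
    qed
    finally show ?thesis
      using n(1) by (simp add: mult_le_cancel_left_pos)
  qed
  have "(\<lambda>n. 24 ^ q * K * real n powr e) \<longlonglongrightarrow> 0"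
    using q unfolding e_def
    by (intro tendsto_mult_right_zero tendsto_neg_powr filterlim_real_sequentially) simp
  then have "m x * a\<^sup>2 \<le> 0"
    using bound by (intro LIMSEQ_le_const) auto
  then show ?thesis
    unfolding a_def using measure_pos[of x] by (simp add: mult_le_0_iff)
qed

end

theorem corollary4p3:
  fixes E :: "'a \<Rightarrow> 'a \<Rightarrow> bool" and w :: "'a \<Rightarrow> 'a \<Rightarrow> real" and m :: "'a \<Rightarrow> real"
    and \<rho> :: "'a \<Rightarrow> 'a \<Rightarrow> real" and k \<alpha> C :: real and x0 :: 'a
    and u :: "'a \<Rightarrow> int \<Rightarrow> real" and q :: nat
  assumes G: "weighted_graph E w m"
    and intr: "intrinsic_metric E w m \<rho>"
    and fin_balls: "\<forall>x R. finite (ball \<rho> x R)"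
    and jump: "\<exists>s. \<forall>x y. E x y \<longrightarrow> \<rho> x y \<le> s"
    and vol: "\<forall>R>0. sum m (ball \<rho> x0 R) \<le> C * (1 + R) powr \<alpha>"
    and k: "k > 0"
    and u: "u \<in> P_tilde E w m \<rho> k"
    and q: "4 * real q > 2 * k + \<alpha> + 2"
  shows "(\<forall>x. \<forall>t\<le>0. ((Dt ^^ q) u) x t = 0) \<and>
         (\<exists>p :: nat \<Rightarrow> 'a \<Rightarrow> real. \<forall>x. \<forall>t\<le>0.
            u x t = (\<Sum>i<q. p i x * real (nat (- t) choose i)))"
proof -
  obtain s where "\<forall>x y. E x y \<longrightarrow> \<rho> x y \<le> s"
    using jump by blast
  then have s: "E x y \<Longrightarrow> \<rho> x y \<le> max s 0" for x y
    using max.coboundedI1 by blast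
  interpret intrinsic_graph E w m \<rho> x0 "max s 0"
    using G intr fin_balls s by unfold_locales auto
  obtain x1 Cu where anc: "ancient_solution E w m u"
    and bnd: "\<forall>R>0. \<forall>y\<in>ball \<rho> x1 R. \<forall>t::int. - (R\<^sup>2) \<le> real_of_int t \<and> t \<le> 0 \<longrightarrow> \<bar>u y t\<bar> \<le> Cu * (1 + R) powr k"
    using u unfolding P_tilde_def by blast
  have vanish: "\<forall>x. \<forall>t\<le>0. (Dt ^^ q) u x t = 0"
    by (intro allI impI Dt_funpow_eq_zero[OF anc bnd vol q])
  then have "\<forall>x. \<exists>c :: nat \<Rightarrow> real. \<forall>t\<le>0. u x t = (\<Sum>i<q. c i * real (nat (- t) choose i))"
    by (intro allI Dt_funpow_eq_zero_imp_binomial_sum) simp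
  then obtain p where p: "\<forall>x. \<forall>t\<le>0. u x t = (\<Sum>i<q. p x i * real (nat (- t) choose i))"
    by (metis choice)
  show ?thesis
    using vanish p by (intro conjI exI[of _ "\<lambda>i x. p x i"]) simp_all
qed

end
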